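(* Let $B>0$ and let $(\alpha_d)_{d\ge3}$, $(\beta_d)_{d\ge3}$ be real sequences such that $\{\alpha_d\varphi(d):d\ge3\}$ is bounded and $\lim_{d\to\infty}\beta_d=0$. For $d\ge3$ let $$\mathcal{E}_d(\infty)=\sum_{m\ge2}F_d(m)\left(B^2\frac{d\,m^{2\alpha_d}}{\varphi(m)\log(m)^{1-2\beta_d}}\right)^{\varphi(d)/4}.$$ Then $$\sum_{d\ge3\,:\,\varphi(d)(1-2\alpha_d)>4}\mathcal{E}_d(\infty)<\infty.$$
   Context: $F_d(m)$ denotes the number of even primitive Dirichlet characters of order $d$ and conductor $m$; $\varphi$ is Euler's totient function. *)

theory Defs
  imports "HOL-Analysis.Analysis" "HOL-Number_Theory.Number_Theory"
begin

definition dirichlet_char :: "nat \<Rightarrow> (nat \<Rightarrow> complex) \<Rightarrow> bool" where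
  "dirichlet_char m c \<longleftrightarrow> m \<ge> 1 \<and> c 1 = 1 \<and>
     (\<forall>a b. c (a * b) = c a * c b) \<and>
     (\<forall>a. c (a + m) = c a) \<and>
     (\<forall>a. c a \<noteq> 0 \<longleftrightarrow> coprime a m)"

definition char_order :: "nat \<Rightarrow> (nat \<Rightarrow> complex) \<Rightarrow> nat" where
  "char_order m c = (LEAST k. k > 0 \<and> (\<forall>a. coprime a m \<longrightarrow> c a ^ k = 1))"

text \<open>Primitive: not induced by a character of a smaller modulus q dividing m,
  i.e. for no proper divisor q of m is c constant on the classes mod q
  (restricted to residues coprime to m). Primitive characters mod m are
  exactly the characters of conductor m.\<close>
definition primitive_char :: "nat \<Rightarrow> (nat \<Rightarrow> complex) \<Rightarrow> bool" where
  "primitive_char m c \<longleftrightarrow> dirichlet_char m c \<and>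
     (\<forall>q. q dvd m \<and> q < m \<longrightarrow>
        (\<exists>a b. coprime a m \<and> coprime b m \<and> [a = b] (mod q) \<and> c a \<noteq> c b))"

text \<open>Even: c(-1) = c(m-1) = 1.\<close>
definition even_char :: "nat \<Rightarrow> (nat \<Rightarrow> complex) \<Rightarrow> bool" where
  "even_char m c \<longleftrightarrow> c (m - 1) = 1"

definition F :: "nat \<Rightarrow> nat \<Rightarrow> nat" where
  "F d m = card {c. primitive_char m c \<and> even_char m c \<and> char_order m c = d}"

definition E_term :: "real \<Rightarrow> real \<Rightarrow> real \<Rightarrow> nat \<Rightarrow> nat \<Rightarrow> real" where
  "E_term B al be d m = real (F d m) *
     (B^2 * (real d * real m powr (2 * al)) /
        (real (totient m) * ln (real m) powr (1 - 2 * be))) powr (real (totient d) / 4)"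

text \<open>E_d(\<infinity>), as an extended nonnegative real (a sum of nonnegative terms).\<close>
definition E_inf :: "real \<Rightarrow> real \<Rightarrow> real \<Rightarrow> nat \<Rightarrow> ennreal" where
  "E_inf B al be d = (\<Sum>m. if m \<ge> 2 then ennreal (E_term B al be d m) else 0)"

end

theory Submission
  imports Defs "HOL-Real_Asymp.Real_Asymp"
begin

text \<open>A Dirichlet character of order \<open>d\<close> modulo \<open>m\<close> vanishes off the units and takes
  \<open>d\<close>-th roots of unity on them, and the unit group modulo \<open>m\<close> is generated by at most
  two elements per prime factor of \<open>m\<close>. Writing \<open>\<omega> m\<close> for the number of prime factors,
  this gives \<open>F d m \<le> (d + 1) ^ (2 * \<omega> m)\<close>. With \<open>m \<le> 2 ^ \<omega> m * totient m\<close> and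
  \<open>K ^ \<omega> m = O(m powr \<epsilon>)\<close>, the \<open>m\<close>-th term of \<open>E_d(\<infinity>)\<close> is \<open>O(m powr (-1 - \<delta>))\<close> for each
  fixed \<open>d\<close> with \<open>totient d * (1 - 2 * \<alpha> d) > 4\<close>.
  For large \<open>d\<close> only \<open>m\<close> with \<open>totient m \<ge> d\<close> contribute. If \<open>m \<le> d ^ 4\<close>, then
  \<open>ln m \<ge> ln d\<close> bounds the term by \<open>d powr O(log d) * 2 powr (- totient d / 4)\<close>; if
  \<open>m > d ^ 4\<close>, then \<open>B\<^sup>2 * d / totient m = O(m powr (- 1 / 4))\<close> bounds it by
  \<open>m powr (O(log d) - totient d / 32)\<close>. As \<open>totient d\<close> grows like \<open>sqrt d\<close> at least, both
  bounds are eventually below \<open>1 / (m\<^sup>2 * d\<^sup>2)\<close>, which is summable over \<open>d\<close> and \<open>m\<close>.\<close>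

section \<open>Dirichlet characters and generators of the unit group\<close>

lemma dirichlet_char_cong:
  assumes "dirichlet_char m c" "[a = b] (mod m)"
  shows "c a = c b"
proof -
  have periodic: "c (r + k * m) = c r" for r k
  proof (induction k)
    case (Suc k)
    have "c (r + Suc k * m) = c ((r + k * m) + m)" by (simp add: algebra_simps)
    with Suc assms(1) show ?case by (simp add: dirichlet_char_def)
  qed simp
  have "c (x mod m) = c x" for x
    using periodic[of "x mod m" "x div m"] by simp
  then show ?thesis using assms(2) unfolding cong_def by metis
qed

lemma dirichlet_char_power:
  assumes "dirichlet_char m c"
  shows "c (a ^ k) = c a ^ k"
  using assms by (induction k) (auto simp: dirichlet_char_def)

lemma dirichlet_char_pow_totient:
  assumes "dirichlet_char m c" "coprime a m"
  shows "c a ^ totient m = 1"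
proof -
  have "c a ^ totient m = c (a ^ totient m)"
    using dirichlet_char_power[OF assms(1)] by simp
  also have "\<dots> = c 1"
    using dirichlet_char_cong[OF assms(1) euler_theorem[OF assms(2)]] .
  finally show ?thesis using assms(1) by (simp add: dirichlet_char_def)
qed

lemma
  assumes "dirichlet_char m c"
  shows dirichlet_char_pow_char_order: "coprime a m \<Longrightarrow> c a ^ char_order m c = 1"
    and char_order_le_totient: "char_order m c \<le> totient m"
proof -
  have totient: "totient m > 0 \<and> (\<forall>a. coprime a m \<longrightarrow> c a ^ totient m = 1)"
    using assms dirichlet_char_pow_totient[OF assms] by (auto simp: dirichlet_char_def)
  show "coprime a m \<Longrightarrow> c a ^ char_order m c = 1"
    using LeastI[of "\<lambda>k. k > 0 \<and> (\<forall>a. coprime a m \<longrightarrow> c a ^ k = 1)", OF totient]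
    by (simp add: char_order_def)
  show "char_order m c \<le> totient m"
    unfolding char_order_def by (rule Least_le) (use totient in blast)
qed

definition prod_powers :: "'a::comm_monoid_mult list \<Rightarrow> nat list \<Rightarrow> 'a" where
  "prod_powers gs es = prod_list (map2 (\<lambda>g e. g ^ e) gs es)"

lemma prod_powers_Nil [simp]: "prod_powers [] es = 1"
  by (simp add: prod_powers_def)

lemma prod_powers_Nil2 [simp]: "prod_powers gs [] = 1"
  by (simp add: prod_powers_def)

lemma prod_powers_Cons [simp]: "prod_powers (g # gs) (e # es) = g ^ e * prod_powers gs es"
  by (simp add: prod_powers_def)

lemma prod_powers_append:
  "length ga = length ea \<Longrightarrow> prod_powers (ga @ gb) (ea @ eb) = prod_powers ga ea * prod_powers gb eb"
  by (simp add: prod_powers_def)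

lemma prod_powers_map_one: "prod_powers (map (\<lambda>_. 1) gs) es = 1"
proof (induction gs arbitrary: es)
  case (Cons g gs)
  then show ?case by (cases es) auto
qed simp

lemma cong_prod_powers:
  assumes "\<And>g. g \<in> set gs \<Longrightarrow> [f g = h g] (mod n)"
  shows "[prod_powers (map f gs) es = prod_powers (map h gs) es] (mod n)"
  using assms
proof (induction gs arbitrary: es)
  case (Cons g gs)
  then show ?case by (cases es) (auto intro: cong_mult cong_pow)
qed simp

lemma dirichlet_char_prod_powers:
  assumes "dirichlet_char m c"
  shows "c (prod_powers gs es) = prod_powers (map c gs) es"
proof (induction gs arbitrary: es)
  case Nil then show ?case using assms by (simp add: dirichlet_char_def)
next
  case (Cons g gs)
  have "c (a * b) = c a * c b" "c 1 = 1" for a b using assms by (auto simp: dirichlet_char_def)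
  with Cons show ?case by (cases es) (simp_all add: dirichlet_char_power[OF assms])
qed

definition generates_units :: "nat \<Rightarrow> nat list \<Rightarrow> bool" where
  "generates_units m gs \<longleftrightarrow>
     (\<forall>x. coprime x m \<longrightarrow> (\<exists>es. length es = length gs \<and> [x = prod_powers gs es] (mod m)))"

lemma generates_units_one: "generates_units 1 []"
  by (auto simp: generates_units_def)

lemma generates_units_mult:
  assumes "coprime a b" "generates_units a ga" "generates_units b gb"
  obtains gs where "generates_units (a * b) gs" "length gs = length ga + length gb"
proof -
  define f where "f g = (SOME y. [y = g] (mod a) \<and> [y = 1] (mod b))" for g
  define h where "h g = (SOME y. [y = 1] (mod a) \<and> [y = g] (mod b))" for g
  have f: "[f g = g] (mod a)" "[f g = 1] (mod b)" for g
    using someI_ex[OF binary_chinese_remainder_nat[OF assms(1), of g 1]] by (auto simp: f_def)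
  have h: "[h g = 1] (mod a)" "[h g = g] (mod b)" for g
    using someI_ex[OF binary_chinese_remainder_nat[OF assms(1), of 1 g]] by (auto simp: h_def)
  have "generates_units (a * b) (map f ga @ map h gb)"
    unfolding generates_units_def
  proof (intro allI impI)
    fix x assume "coprime x (a * b)"
    then have "coprime x a" "coprime x b" by auto
    then obtain ea eb where ea: "length ea = length ga" "[x = prod_powers ga ea] (mod a)"
      and eb: "length eb = length gb" "[x = prod_powers gb eb] (mod b)"
      using assms(2,3) unfolding generates_units_def by blast
    define y where "y = prod_powers (map f ga @ map h gb) (ea @ eb)"
    have y: "y = prod_powers (map f ga) ea * prod_powers (map h gb) eb"
      using ea(1) unfolding y_def by (intro prod_powers_append) simp
    have "[y = prod_powers (map id ga) ea * prod_powers (map (\<lambda>_. 1) gb) eb] (mod a)"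
      unfolding y using f h by (intro cong_mult cong_prod_powers) auto
    then have "[y = prod_powers ga ea] (mod a)"
      by (simp only: prod_powers_map_one list.map_id mult_1_right)
    with ea(2) have "[x = y] (mod a)" by (blast intro: cong_trans cong_sym)
    moreover have "[y = prod_powers (map (\<lambda>_. 1) ga) ea * prod_powers (map id gb) eb] (mod b)"
      unfolding y using f h by (intro cong_mult cong_prod_powers) auto
    then have "[y = prod_powers gb eb] (mod b)"
      by (simp only: prod_powers_map_one list.map_id mult_1_left)
    with eb(2) have "[x = y] (mod b)" by (blast intro: cong_trans cong_sym)
    ultimately have "[x = y] (mod a * b)"
      using assms(1) by (rule coprime_cong_mult_nat)
    then show "\<exists>es. length es = length (map f ga @ map h gb) \<and>
                 [x = prod_powers (map f ga @ map h gb) es] (mod a * b)"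
      using ea(1) eb(1) unfolding y_def by (intro exI[of _ "ea @ eb"]) auto
  qed
  then show ?thesis by (rule that) simp
qed

lemma mod_in_totatives:
  fixes x n :: nat
  assumes "coprime x n" "n > 1"
  shows "x mod n \<in> totatives n"
proof -
  have "x mod n \<noteq> 0"
    using assms coprime_common_divisor[OF assms(1), of n] by (auto simp: dvd_eq_mod_eq_0)
  then show ?thesis using assms by (auto simp: in_totatives_iff)
qed

lemma generates_units_by_image:
  assumes "n > 1" "totatives n \<subseteq> (\<lambda>es. prod_powers gs es mod n) ` {es. length es = length gs}"
  shows "generates_units n gs"
  unfolding generates_units_def
proof (intro allI impI)
  fix x assume "coprime x n"
  then obtain es where "length es = length gs" "x mod n = prod_powers gs es mod n"
    using mod_in_totatives[OF _ assms(1)] assms(2) by blast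
  then show "\<exists>es. length es = length gs \<and> [x = prod_powers gs es] (mod n)"
    unfolding cong_def by blast
qed

lemma generates_units_odd_prime_power:
  assumes "prime p" "odd p" "k > 0"
  obtains g where "generates_units (p ^ k) [g]"
proof -
  obtain g where g: "residue_primroot (p ^ k) g"
    using residue_primroot_odd_prime_power_exists[OF assms(1,2)] assms(3) by blast
  have pk: "p ^ k > 1" using assms prime_gt_1_nat one_less_power by blast
  have "totatives (p ^ k) \<subseteq> (\<lambda>es. prod_powers [g] es mod p ^ k) ` {es. length es = length [g]}"
  proof
    fix x assume "x \<in> totatives (p ^ k)"
    then obtain i where "x = g ^ i mod p ^ k"
      using residue_primroot_is_generator[OF pk g] by (auto simp: bij_betw_def)
    then show "x \<in> (\<lambda>es. prod_powers [g] es mod p ^ k) ` {es. length es = length [g]}"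
      by (intro image_eqI[of _ _ "[i]"]) auto
  qed
  then show ?thesis by (intro that generates_units_by_image[OF pk])
qed

text \<open>Modulo 4 the factor \<open>5 ^ i\<close> is invisible, which separates the sign \<open>s\<close>; then \<open>i\<close>
  is determined because \<open>5\<close> has order \<open>2 ^ (k - 2)\<close> modulo \<open>2 ^ k\<close>.\<close>

lemma two_power_units_inj:
  assumes "k \<ge> 3"
  defines "n \<equiv> 2 ^ k :: nat"
  assumes st: "s \<in> {0, 1}" "t \<in> {0, 1}" and ij: "i < 2 ^ (k - 2)" "j < 2 ^ (k - 2)"
    and eq: "[(n - 1) ^ s * 5 ^ i = (n - 1) ^ t * 5 ^ j] (mod n)"
  shows "s = t \<and> i = j"
proof -
  have "n > 0" by (simp add: n_def)
  have "4 dvd n" using le_imp_power_dvd[of 2 k 2] assms unfolding n_def by simp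
  then obtain q where "n = 4 * q" by blast
  with \<open>n > 0\<close> have "n - 1 = 4 * (q - 1) + 3" by simp
  then have minus_one: "[n - 1 = 3] (mod 4)" by (simp add: cong_def)
  have five: "[5 ^ i = 1] (mod (4::nat))" for i :: nat
    using cong_pow[of "5::nat" 1 4 i] by (simp add: cong_def)
  have mod4: "[(n - 1) ^ s * 5 ^ i = 3 ^ s * 1] (mod 4)" for s i
    by (intro cong_mult cong_pow minus_one five)
  have "[(n - 1) ^ s * 5 ^ i = (n - 1) ^ t * 5 ^ j] (mod 4)"
    using eq \<open>4 dvd n\<close> cong_dvd_modulus_nat by blast
  then have "[3 ^ s * 1 = (3::nat) ^ t * 1] (mod 4)"
    using cong_trans[OF cong_sym[OF mod4[of s i]] cong_trans[OF _ mod4[of t j]]] by blast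
  with st have "s = t" by (auto simp: cong_def)
  have "coprime ((n - 1) ^ t) n"
    using coprime_diff_one_left_nat[OF \<open>n > 0\<close>] by simp
  then have "[5 ^ i = 5 ^ j] (mod n)"
    using eq \<open>s = t\<close> cong_mult_lcancel_nat by blast
  moreover have "coprime n 5" by (simp add: n_def)
  moreover have "ord n 5 = 2 ^ (k - 2)" unfolding n_def using ord_twopow_3_5[OF assms(1)] by simp
  ultimately have "i = j"
    using inj_power_mod[of n 5] ij unfolding inj_on_def cong_def by auto
  with \<open>s = t\<close> show ?thesis ..
qed

lemma generates_units_two_power:
  assumes "k \<ge> 3"
  shows "generates_units (2 ^ k) [2 ^ k - 1, 5]"
proof -
  define n :: nat where "n = 2 ^ k"
  define f where "f = (\<lambda>(s, i). (n - 1) ^ s * 5 ^ i mod n)"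
  define D where "D = {0::nat, 1} \<times> {..<(2::nat) ^ (k - 2)}"
  have n1: "n > 1" using assms unfolding n_def by (intro one_less_power) auto
  have sub: "f ` D \<subseteq> totatives n"
  proof
    fix x assume "x \<in> f ` D"
    then obtain s i where x: "x = (n - 1) ^ s * 5 ^ i mod n" by (auto simp: f_def)
    have "coprime (n - 1) n" using n1 by (intro coprime_diff_one_left_nat) simp
    moreover have "coprime 5 n" by (simp add: n_def)
    ultimately have "coprime ((n - 1) ^ s * 5 ^ i) n" by simp
    then show "x \<in> totatives n" unfolding x using n1 by (rule mod_in_totatives)
  qed
  have "inj_on f D"
  proof (rule inj_onI)
    fix x y assume "x \<in> D" "y \<in> D" "f x = f y"
    moreover obtain s i t j where "x = (s, i)" "y = (t, j)" by fastforce
    ultimately show "x = y"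
      using two_power_units_inj[OF assms, of s t i j, folded n_def] by (simp add: D_def f_def cong_def)
  qed
  then have "card (f ` D) = 2 * 2 ^ (k - 2)"
    by (simp add: card_image D_def card_cartesian_product)
  also have "\<dots> = totient n"
  proof -
    have "k - 1 = Suc (k - 2)" using assms by simp
    then show ?thesis using assms totient_prime_power[of 2 k] unfolding n_def by simp
  qed
  finally have "f ` D = totatives n"
    using card_subset_eq[OF _ sub] by (simp add: totient_def)
  moreover have "f ` D \<subseteq> (\<lambda>es. prod_powers [n - 1, 5] es mod n) ` {es. length es = length [n - 1, 5]}"
  proof
    fix x assume "x \<in> f ` D"
    then obtain s i where "x = f (s, i)" by auto
    then show "x \<in> (\<lambda>es. prod_powers [n - 1, 5] es mod n) ` {es. length es = length [n - 1, 5]}"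
      by (intro image_eqI[of _ _ "[s, i]"]) (simp_all add: f_def)
  qed
  ultimately have "generates_units n [n - 1, 5]"
    by (intro generates_units_by_image[OF n1]) simp
  then show ?thesis by (simp add: n_def)
qed

lemma generates_units_prime_power:
  assumes "prime p" "k > 0"
  obtains gs where "generates_units (p ^ k) gs" "length gs \<le> 2"
proof (cases "p = 2")
  case True
  consider "k = 1" | "k = 2" | "k \<ge> 3" using assms(2) by linarith
  then show ?thesis
  proof cases
    case 1
    have "generates_units 2 []"
      by (auto simp: generates_units_def cong_def odd_iff_mod_2_eq_one)
    then show ?thesis by (intro that[of "[]"]) (simp_all add: True 1)
  next
    case 2
    have "generates_units 4 [3]"
      unfolding generates_units_def
    proof (intro allI impI)
      fix x :: nat assume "coprime x 4"
      then have "coprime x (2 ^ 2)" by simp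
      then have "odd x" by (simp only: coprime_power_right_iff) simp
      then have "x mod 4 = 1 \<or> x mod 4 = 3" by presburger
      then have "[x = prod_powers [3] [if x mod 4 = 1 then 0 else 1]] (mod 4)"
        by (auto simp: cong_def)
      then show "\<exists>es. length es = length [3::nat] \<and> [x = prod_powers [3] es] (mod 4)"
        by (intro exI[of _ "[if x mod 4 = 1 then 0 else 1]"]) simp
    qed
    then show ?thesis by (intro that[of "[3]"]) (simp_all add: True 2)
  next
    case 3
    then show ?thesis
      using generates_units_two_power[OF 3] by (intro that[of "[2 ^ k - 1, 5]"]) (simp_all add: True)
  qed
next
  case False
  then have "odd p" using prime_odd_nat[OF assms(1)] prime_ge_2_nat[OF assms(1)] by fastforce
  then obtain g where "generates_units (p ^ k) [g]"
    using generates_units_odd_prime_power[OF assms(1) _ assms(2)] by blast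
  then show ?thesis by (intro that[of "[g]"]) simp_all
qed

lemma generates_units_exists:
  assumes "m > 0"
  obtains gs where "generates_units m gs" "length gs \<le> 2 * card (prime_factors m)"
  using assms
proof (induction m arbitrary: thesis rule: less_induct)
  case (less m)
  show ?case
  proof (cases "m = 1")
    case True
    then show ?thesis using generates_units_one by (intro less.prems(1)[of "[]"]) simp_all
  next
    case False
    have "m \<noteq> 0" using less.prems(2) by simp
    obtain q where "prime q" "q dvd m" using prime_factor_nat[OF False] by blast
    then have "\<exists>p\<in>prime_factors m. True" using \<open>m \<noteq> 0\<close> by (auto simp: in_prime_factors_iff)
    from divide_out_primepow_ex[OF \<open>m \<noteq> 0\<close> this]
    obtain p k n where pk: "prime p" "\<not> p dvd n" "k > 0" "m = p ^ k * n" .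
    have "p ^ k > 1" using pk(1,3) prime_gt_1_nat one_less_power by blast
    moreover have "n > 0" using \<open>m \<noteq> 0\<close> pk(4) by (cases n) simp_all
    ultimately have "n < m" using pk(4) by simp
    then obtain gn where gn: "generates_units n gn" "length gn \<le> 2 * card (prime_factors n)"
      using less.IH \<open>n > 0\<close> by blast
    obtain gp where gp: "generates_units (p ^ k) gp" "length gp \<le> 2"
      using generates_units_prime_power[OF pk(1,3)] .
    have "coprime (p ^ k) n" using pk(1,2) by (simp add: prime_imp_coprime)
    from generates_units_mult[OF this gp(1) gn(1)]
    obtain gs where gs: "generates_units m gs" "length gs = length gp + length gn"
      unfolding pk(4) .
    have "prime_factors m = insert p (prime_factors n)"
      using pk \<open>n > 0\<close> by (simp add: prime_factors_product prime_factors_power prime_prime_factors)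
    moreover have "p \<notin> prime_factors n" using pk by (auto simp: in_prime_factors_iff)
    ultimately have "card (prime_factors m) = Suc (card (prime_factors n))" by simp
    then show ?thesis using gs gp gn by (intro less.prems(1)[of gs]) simp_all
  qed
qed

lemma dirichlet_char_eq_0_iff:
  assumes "dirichlet_char m c"
  shows "c a = 0 \<longleftrightarrow> \<not> coprime a m"
  using assms unfolding dirichlet_char_def by blast

lemma dirichlet_char_eqI:
  assumes "dirichlet_char m c" "dirichlet_char m c'" "generates_units m gs" "map c gs = map c' gs"
  shows "c = c'"
proof
  fix x
  show "c x = c' x"
  proof (cases "coprime x m")
    case True
    then obtain es where es: "[x = prod_powers gs es] (mod m)"
      using assms(3) unfolding generates_units_def by blast
    have "c x = prod_powers (map c gs) es"
      using dirichlet_char_cong[OF assms(1) es] dirichlet_char_prod_powers[OF assms(1)] by simp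
    also have "\<dots> = prod_powers (map c' gs) es" by (simp only: assms(4))
    also have "\<dots> = c' x"
      using dirichlet_char_cong[OF assms(2) es] dirichlet_char_prod_powers[OF assms(2)] by simp
    finally show ?thesis .
  next
    case False
    then show ?thesis
      using dirichlet_char_eq_0_iff[OF assms(1), of x] dirichlet_char_eq_0_iff[OF assms(2), of x] by simp
  qed
qed

lemma dirichlet_char_value_cases:
  assumes "dirichlet_char m c"
  shows "c x = 0 \<or> c x ^ char_order m c = 1"
proof (cases "coprime x m")
  case True
  then show ?thesis using dirichlet_char_pow_char_order[OF assms] by simp
next
  case False
  then show ?thesis using dirichlet_char_eq_0_iff[OF assms] by simp
qed

lemma
  fixes d m :: nat
  defines "S \<equiv> {c. dirichlet_char m c \<and> char_order m c = d}"
  assumes "d \<ge> 1" "m \<ge> 1"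
  shows finite_chars_of_order: "finite S"
    and card_chars_of_order_le: "card S \<le> (d + 1) ^ (2 * card (prime_factors m))"
proof -
  have "m > 0" using assms(3) by simp
  then obtain gs where gs: "generates_units m gs" "length gs \<le> 2 * card (prime_factors m)"
    by (rule generates_units_exists)
  define R :: "complex set" where "R = insert 0 {z. z ^ d = 1}"
  define L where "L = {xs. set xs \<subseteq> R \<and> length xs = length gs}"
  have "finite {z::complex. z ^ d = 1}" using finite_roots_unity[of d] assms(2) by simp
  then have R: "finite R" "card R \<le> d + 1"
    using card_roots_unity[of d] assms(2) card_insert_le_m1[of d] unfolding R_def
    by (auto simp: card_insert_if)
  have inj: "inj_on (\<lambda>c. map c gs) S"
    by (rule inj_onI) (auto simp: S_def intro: dirichlet_char_eqI[OF _ _ gs(1)])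
  have "set (map c gs) \<subseteq> R" if "c \<in> S" for c
  proof
    fix z assume "z \<in> set (map c gs)"
    then obtain g where "z = c g" by auto
    moreover have "c g = 0 \<or> c g ^ d = 1"
      using dirichlet_char_value_cases[of m c g] that by (simp add: S_def)
    ultimately show "z \<in> R" by (auto simp: R_def)
  qed
  then have "(\<lambda>c. map c gs) ` S \<subseteq> L" unfolding L_def by (intro image_subsetI) auto
  moreover have "finite L" unfolding L_def using R(1) by (rule finite_lists_length_eq)
  ultimately have "finite ((\<lambda>c. map c gs) ` S)" by (rule finite_subset)
  then show "finite S" using inj by (rule finite_imageD)
  have "card S \<le> card L"
    using card_image[OF inj] card_mono[OF \<open>finite L\<close> \<open>_ ` S \<subseteq> L\<close>] by simp
  also have "\<dots> = card R ^ length gs" unfolding L_def by (rule card_lists_length_eq[OF R(1)])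
  also have "\<dots> \<le> (d + 1) ^ length gs" using R(2) by (rule power_mono) simp
  also have "\<dots> \<le> (d + 1) ^ (2 * card (prime_factors m))" using gs(2) by (rule power_increasing) simp
  finally show "card S \<le> (d + 1) ^ (2 * card (prime_factors m))" .
qed

lemma F_le:
  assumes "d \<ge> 1" "m \<ge> 1"
  shows "F d m \<le> (d + 1) ^ (2 * card (prime_factors m))"
proof -
  have "F d m \<le> card {c. dirichlet_char m c \<and> char_order m c = d}"
    unfolding F_def primitive_char_def
    by (intro card_mono finite_chars_of_order assms) auto
  with card_chars_of_order_le[OF assms] show ?thesis by linarith
qed

lemma F_pos_imp_le_totient:
  assumes "F d m > 0"
  shows "d \<le> totient m"
proof -
  have "{c. primitive_char m c \<and> even_char m c \<and> char_order m c = d} \<noteq> {}"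
    using assms unfolding F_def by (auto simp: card_gt_0_iff)
  then obtain c where "primitive_char m c" "char_order m c = d" by blast
  then show ?thesis using char_order_le_totient by (auto simp: primitive_char_def)
qed

section \<open>The number of prime factors\<close>

lemma prod_subset_prime_factors_le:
  assumes "m > (0::nat)" "A \<subseteq> prime_factors m"
  shows "(\<Prod>p\<in>A. p) \<le> m"
proof -
  have "(\<Prod>p\<in>A. p) \<le> (\<Prod>p\<in>prime_factors m. p)"
    using assms(2) by (intro dvd_imp_le prod_dvd_prod_subset) (auto intro: prod_pos prime_gt_0_nat)
  also have "\<dots> \<le> (\<Prod>p\<in>prime_factors m. p ^ multiplicity p m)"
  proof (rule prod_mono)
    fix p assume "p \<in> prime_factors m"
    then have "multiplicity p m \<ge> 1" "p \<ge> 1"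
      by (auto simp: prime_factors_multiplicity intro: Suc_leI prime_gt_0_nat)
    then show "0 \<le> p \<and> p \<le> p ^ multiplicity p m"
      using power_increasing[of 1 "multiplicity p m" p] by simp
  qed
  also have "\<dots> = m" using prime_factorization_nat[OF assms(1)] by simp
  finally show ?thesis .
qed

lemma two_pow_card_prime_factors_le:
  assumes "m > (0::nat)"
  shows "2 ^ card (prime_factors m) \<le> m"
proof -
  have "(2::nat) ^ card (prime_factors m) = (\<Prod>p\<in>prime_factors m. 2)" by simp
  also have "\<dots> \<le> (\<Prod>p\<in>prime_factors m. p)"
    by (rule prod_mono) (auto intro: prime_ge_2_nat)
  also have "\<dots> \<le> m" by (rule prod_subset_prime_factors_le[OF assms order_refl])
  finally show ?thesis .
qed

lemma pow_card_prime_factors_le: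
  fixes K \<epsilon> :: real
  assumes "K \<ge> 1" "\<epsilon> > 0"
  obtains C where "C > 0" "\<And>m. m > 0 \<Longrightarrow> K ^ card (prime_factors m) \<le> C * real m powr \<epsilon>"
proof
  define T where "T = nat \<lceil>K powr (1 / \<epsilon>)\<rceil>"
  show "K ^ (T + 1) > 0" using assms by simp
  fix m :: nat assume m: "m > 0"
  define small where "small = {p \<in> prime_factors m. p \<le> T}"
  define large where "large = {p \<in> prime_factors m. p > T}"
  have "K ^ card (prime_factors m) = K ^ card small * K ^ card large"
  proof -
    have "prime_factors m = small \<union> large" "small \<inter> large = {}" "finite small" "finite large"
      by (auto simp: small_def large_def)
    then have "card (prime_factors m) = card small + card large"
      by (metis card_Un_disjoint)
    then show ?thesis by (simp add: power_add)
  qed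
  also have "K ^ card small \<le> K ^ (T + 1)"
  proof -
    have "card small \<le> card {..T}" by (intro card_mono) (auto simp: small_def)
    then show ?thesis using assms(1) by (intro power_increasing) auto
  qed
  also have "K ^ card large = (\<Prod>p\<in>large. K)" by simp
  also have "\<dots> \<le> (\<Prod>p\<in>large. real p powr \<epsilon>)"
  proof (rule prod_mono)
    fix p assume "p \<in> large"
    have "K powr (1 / \<epsilon>) \<le> real T" unfolding T_def by linarith
    also have "real T < real p" using \<open>p \<in> large\<close> by (simp add: large_def)
    finally have "K powr (1 / \<epsilon>) \<le> real p" by simp
    then have "(K powr (1 / \<epsilon>)) powr \<epsilon> \<le> real p powr \<epsilon>"
      using assms by (intro powr_mono2) auto
    then show "0 \<le> K \<and> K \<le> real p powr \<epsilon>" using assms by (simp add: powr_powr)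
  qed
  also have "\<dots> = real (\<Prod>p\<in>large. p) powr \<epsilon>" by (simp add: prod_powr_distrib)
  also have "\<dots> \<le> real m powr \<epsilon>"
  proof -
    have "(\<Prod>p\<in>large. p) \<le> m"
      using prod_subset_prime_factors_le[OF m, of large] by (auto simp: large_def)
    then have "real (\<Prod>p\<in>large. p) \<le> real m" by (simp only: of_nat_le_iff)
    then show ?thesis using assms(2) by (intro powr_mono2) (auto simp del: of_nat_prod)
  qed
  finally show "K ^ card (prime_factors m) \<le> K ^ (T + 1) * real m powr \<epsilon>"
    using assms(1) by (simp add: mult_right_mono)
qed

lemma le_two_pow_card_prime_factors_totient:
  "real m \<le> 2 ^ card (prime_factors m) * real (totient m)"
proof -
  have "(1 / 2) ^ card (prime_factors m) = (\<Prod>p\<in>prime_factors m. 1 / 2 :: real)" by simp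
  also have "\<dots> \<le> (\<Prod>p\<in>prime_factors m. 1 - 1 / real p)"
  proof (rule prod_mono)
    fix p assume "p \<in> prime_factors m"
    then have "real p \<ge> 2" using prime_ge_2_nat by (auto simp: in_prime_factors_iff)
    then show "0 \<le> (1 / 2 :: real) \<and> 1 / 2 \<le> 1 - 1 / real p" by (simp add: field_simps)
  qed
  finally have "(1 / 2) ^ card (prime_factors m) \<le> (\<Prod>p\<in>prime_factors m. 1 - 1 / real p)" .
  then have "real m * (1 / 2) ^ card (prime_factors m) \<le> real (totient m)"
    using totient_formula2[of m] by (simp add: mult_left_mono)
  then show ?thesis by (simp add: field_simps power_divide)
qed

lemma sqrt_le_totient:
  obtains C where "C > 0" "\<And>m. m > 0 \<Longrightarrow> sqrt (real m) \<le> C * real (totient m)"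
proof -
  obtain C where C: "C > 0" "\<And>m. m > 0 \<Longrightarrow> (2::real) ^ card (prime_factors m) \<le> C * real m powr (1 / 2)"
    using pow_card_prime_factors_le[of 2 "1 / 2"] by auto
  have "sqrt (real m) \<le> C * real (totient m)" if m: "m > 0" for m
  proof -
    have "sqrt (real m) * sqrt (real m) \<le> sqrt (real m) * (C * real (totient m))"
    proof -
      have "sqrt (real m) * sqrt (real m) = real m" by simp
      also have "\<dots> \<le> 2 ^ card (prime_factors m) * real (totient m)"
        by (rule le_two_pow_card_prime_factors_totient)
      also have "\<dots> \<le> C * sqrt (real m) * real (totient m)"
        using C(2)[OF m] by (intro mult_right_mono) (auto simp: powr_half_sqrt)
      finally show ?thesis by (simp add: mult_ac)
    qed
    moreover have "0 < sqrt (real m)" using m by simp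
    ultimately show ?thesis using mult_le_cancel_left_pos[THEN iffD1] by blast
  qed
  with C(1) show ?thesis by (rule that)
qed

section \<open>Estimates for the terms of \<open>E_d(\<infinity>)\<close>\<close>

lemma E_term_eq:
  fixes B al be :: real and d m :: nat
  defines "t \<equiv> real (totient d) / 4"
  assumes "B > 0" "d \<ge> 1" "m \<ge> 2"
  shows "E_term B al be d m = real (F d m) * (B^2 * real d / real (totient m)) powr t
           * real m powr (2 * al * t) / ln (real m) powr ((1 - 2 * be) * t)"
proof -
  have pos: "real (totient m) > 0" "ln (real m) > 0" "real d > 0" "real m > 0"
    using assms by auto
  have eq1: "B^2 * (real d * real m powr (2 * al)) / (real (totient m) * ln (real m) powr (1 - 2 * be))
      = (B^2 * real d / real (totient m)) * (real m powr (2 * al) / ln (real m) powr (1 - 2 * be))"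
    by (simp add: field_simps)
  have eq2: "((B^2 * real d / real (totient m)) * (real m powr (2 * al) / ln (real m) powr (1 - 2 * be))) powr t
      = (B^2 * real d / real (totient m)) powr t * (real m powr (2 * al * t) / ln (real m) powr ((1 - 2 * be) * t))"
    using pos by (simp add: powr_divide powr_mult powr_powr)
  show ?thesis unfolding E_term_def t_def[symmetric] eq1 eq2 by simp
qed

lemma F_le_pow_card_prime_factors:
  assumes "d \<ge> 1" "m \<ge> 1"
  shows "real (F d m) \<le> ((real d + 1) ^ 2) ^ card (prime_factors m)"
proof -
  have "real (F d m) \<le> real ((d + 1) ^ (2 * card (prime_factors m)))"
    using F_le[OF assms] by (simp only: of_nat_le_iff)
  then show ?thesis by (simp add: power_mult add.commute)
qed

lemma F_le_powr:
  assumes "d \<ge> 1" "m \<ge> 1"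
  shows "real (F d m) \<le> real m powr (2 * log 2 (real d + 1))"
proof -
  define w where "w = card (prime_factors m)"
  have "2 powr (2 * log 2 (real d + 1)) = (2 powr (log 2 (real d + 1))) powr 2"
    by (simp only: powr_powr mult.commute)
  also have "\<dots> = (real d + 1) ^ 2" by (simp add: powr_numeral)
  finally have "((real d + 1) ^ 2) ^ w = (2 powr (2 * log 2 (real d + 1))) ^ w" by simp
  also have "\<dots> = (2 ^ w) powr (2 * log 2 (real d + 1))"
    by (simp add: powr_powr powr_realpow[symmetric] mult.commute)
  also have "\<dots> \<le> real m powr (2 * log 2 (real d + 1))"
  proof (rule powr_mono2)
    have "2 ^ w \<le> m" unfolding w_def using assms(2) by (intro two_pow_card_prime_factors_le) simp
    then show "(2::real) ^ w \<le> real m" by (metis of_nat_le_iff of_nat_numeral of_nat_power)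
  qed (use assms in simp_all)
  finally show ?thesis using F_le_pow_card_prime_factors[OF assms] unfolding w_def by linarith
qed

lemma inverse_ln_powr_le:
  fixes \<gamma> \<delta> :: real
  assumes "\<delta> > 0"
  obtains C where "\<And>x. x \<ge> 3 \<Longrightarrow> 1 / ln x powr \<gamma> \<le> C * x powr \<delta>"
proof
  define a where "a = \<delta> / (\<bar>\<gamma>\<bar> + 1)"
  have a: "a > 0" "a * \<bar>\<gamma>\<bar> \<le> \<delta>"
    using assms by (auto simp: a_def field_simps)
  fix x :: real assume "x \<ge> 3"
  then have "ln x \<ge> 1" using ln3_gt_1 ln_le_cancel_iff[of 3 x] by linarith
  have "1 / ln x powr \<gamma> = ln x powr (- \<gamma>)" by (simp add: powr_minus divide_inverse)
  also have "\<dots> \<le> ln x powr \<bar>\<gamma>\<bar>" using \<open>ln x \<ge> 1\<close> by (intro powr_mono) auto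
  also have "\<dots> \<le> (x powr a / a) powr \<bar>\<gamma>\<bar>"
    using ln_powr_bound[of x a] \<open>x \<ge> 3\<close> \<open>ln x \<ge> 1\<close> a by (intro powr_mono2) auto
  also have "\<dots> = (1 / a) powr \<bar>\<gamma>\<bar> * x powr (a * \<bar>\<gamma>\<bar>)"
    using \<open>x \<ge> 3\<close> a by (simp add: powr_divide powr_powr)
  also have "\<dots> \<le> (1 / a) powr \<bar>\<gamma>\<bar> * x powr \<delta>"
    using a \<open>x \<ge> 3\<close> by (intro mult_left_mono powr_mono) auto
  finally show "1 / ln x powr \<gamma> \<le> (1 / a) powr \<bar>\<gamma>\<bar> * x powr \<delta>" .
qed

lemma E_term_le_pow_card_prime_factors:
  fixes B al be :: real and d m :: nat
  defines "t \<equiv> real (totient d) / 4"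
  assumes "B > 0" "d \<ge> 1" "m \<ge> 2"
  shows "E_term B al be d m \<le> (B^2 * real d) powr t * ((real d + 1) ^ 2 * 2 powr t) ^ card (prime_factors m)
           * real m powr (2 * al * t - t) / ln (real m) powr ((1 - 2 * be) * t)"
proof -
  define w where "w = card (prime_factors m)"
  have "t > 0" using assms(3) by (simp add: t_def)
  have m: "real m > 0" "real (totient m) > 0" using assms(4) by auto
  have "real m / 2 ^ w \<le> real (totient m)"
    using le_two_pow_card_prime_factors_totient[of m] by (simp add: w_def field_simps)
  then have "(real m / 2 ^ w) powr t \<le> real (totient m) powr t"
    using \<open>t > 0\<close> m by (intro powr_mono2) auto
  then have "real m powr t / (2 powr t) ^ w \<le> real (totient m) powr t"
    by (simp add: powr_divide powr_realpow[symmetric] powr_powr mult.commute)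
  have totient_factor: "(B^2 * real d / real (totient m)) powr t
      \<le> (B^2 * real d) powr t * (2 powr t) ^ w * real m powr (- t)"
  proof -
    have "(B^2 * real d / real (totient m)) powr t = (B^2 * real d) powr t / real (totient m) powr t"
      by (simp add: powr_divide)
    also have "\<dots> \<le> (B^2 * real d) powr t / (real m powr t / (2 powr t) ^ w)"
      using \<open>real m powr t / (2 powr t) ^ w \<le> real (totient m) powr t\<close> m
      by (intro divide_left_mono) auto
    finally show ?thesis by (simp add: powr_minus divide_inverse mult_ac)
  qed
  have "E_term B al be d m = real (F d m) * (B^2 * real d / real (totient m)) powr t
           * real m powr (2 * al * t) / ln (real m) powr ((1 - 2 * be) * t)"
    using E_term_eq[OF assms(2-4)] by (simp add: t_def)
  also have "\<dots> \<le> ((real d + 1) ^ 2) ^ w * ((B^2 * real d) powr t * (2 powr t) ^ w * real m powr (- t))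
           * real m powr (2 * al * t) / ln (real m) powr ((1 - 2 * be) * t)"
    using F_le_pow_card_prime_factors[of d m] assms totient_factor
    by (intro divide_right_mono mult_right_mono mult_mono) (auto simp: w_def)
  also have "\<dots> = (B^2 * real d) powr t * ((real d + 1) ^ 2 * 2 powr t) ^ w
           * real m powr (2 * al * t - t) / ln (real m) powr ((1 - 2 * be) * t)"
  proof -
    have "real m powr (2 * al * t - t) = real m powr (- t) * real m powr (2 * al * t)"
      unfolding powr_add[symmetric] by (rule arg_cong[where f = "\<lambda>e. real m powr e"]) simp
    then show ?thesis by (simp only: power_mult_distrib mult_ac)
  qed
  finally show ?thesis unfolding w_def .
qed

lemma E_term_le_powr_fixed_d:
  assumes "B > 0" "d \<ge> 1" "real (totient d) * (1 - 2 * al) > 4"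
  obtains C \<delta> where "\<delta> > 0" "\<And>m. m \<ge> 3 \<Longrightarrow> E_term B al be d m \<le> C * real m powr (- (1 + 2 * \<delta>))"
proof -
  define t where "t = real (totient d) / 4"
  define s where "s = t * (1 - 2 * al)"
  define \<delta> where "\<delta> = (s - 1) / 4"
  have "t > 0" using assms(2) by (simp add: t_def)
  have "s = real (totient d) * (1 - 2 * al) / 4" by (simp add: s_def t_def)
  then have "\<delta> > 0" using assms(3) by (simp add: \<delta>_def)
  have s: "2 * al * t - t = - s" by (simp add: s_def algebra_simps)
  have exponent: "\<delta> + (2 * al * t - t) + \<delta> = - (1 + 2 * \<delta>)"
    unfolding s \<delta>_def by (simp add: field_simps)
  define K where "K = (real d + 1) ^ 2 * 2 powr t"
  have "1 * 1 \<le> K" unfolding K_def using \<open>t > 0\<close> by (intro mult_mono ge_one_powr_ge_zero) auto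
  then obtain C1 where C1: "C1 > 0" "\<And>m. m > 0 \<Longrightarrow> K ^ card (prime_factors m) \<le> C1 * real m powr \<delta>"
    using pow_card_prime_factors_le[of K \<delta>] \<open>\<delta> > 0\<close> by auto
  obtain C2 where C2: "\<And>x. x \<ge> 3 \<Longrightarrow> 1 / ln x powr ((1 - 2 * be) * t) \<le> C2 * x powr \<delta>"
    using inverse_ln_powr_le[OF \<open>\<delta> > 0\<close>] by blast
  have "E_term B al be d m \<le> (B^2 * real d) powr t * C1 * C2 * real m powr (- (1 + 2 * \<delta>))"
    if "m \<ge> 3" for m
  proof -
    have "E_term B al be d m \<le> (B^2 * real d) powr t * K ^ card (prime_factors m)
           * real m powr (2 * al * t - t) * (1 / ln (real m) powr ((1 - 2 * be) * t))"
      using E_term_le_pow_card_prime_factors[OF assms(1,2), of m al be] that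
      by (simp add: K_def t_def)
    also have "\<dots> \<le> (B^2 * real d) powr t * (C1 * real m powr \<delta>)
           * real m powr (2 * al * t - t) * (C2 * real m powr \<delta>)"
      using C1 C2[of m] that \<open>1 * 1 \<le> K\<close>
      by (intro mult_mono mult_right_mono mult_left_mono) (auto intro!: mult_nonneg_nonneg)
    also have "\<dots> = (B^2 * real d) powr t * C1 * C2
           * (real m powr \<delta> * real m powr (2 * al * t - t) * real m powr \<delta>)"
      by (simp add: mult_ac)
    also have "\<dots> = (B^2 * real d) powr t * C1 * C2 * real m powr (- (1 + 2 * \<delta>))"
      by (simp only: powr_add[symmetric] exponent)
    finally show ?thesis .
  qed
  with \<open>\<delta> > 0\<close> show ?thesis by (rule that)
qed

lemma summable_E_term:
  assumes "B > 0" "d \<ge> 1" "real (totient d) * (1 - 2 * al) > 4"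
  shows "summable (\<lambda>m. if m \<ge> 2 then E_term B al be d m else 0)"
proof -
  obtain C \<delta> where "\<delta> > 0" and bound: "\<And>m. m \<ge> 3 \<Longrightarrow> E_term B al be d m \<le> C * real m powr (- (1 + 2 * \<delta>))"
    using E_term_le_powr_fixed_d[OF assms] by blast
  have "summable (\<lambda>m. C * real m powr (- (1 + 2 * \<delta>)))"
    using \<open>\<delta> > 0\<close> by (intro summable_mult) (simp add: summable_real_powr_iff)
  moreover have "\<forall>\<^sub>F m in sequentially. norm (if m \<ge> 2 then E_term B al be d m else 0)
      \<le> C * real m powr (- (1 + 2 * \<delta>))"
    using bound by (intro eventually_sequentiallyI[of 3]) (simp add: E_term_def)
  ultimately show ?thesis by (rule summable_comparison_test_ev[rotated])
qed

section \<open>A uniform bound for large \<open>d\<close>\<close>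

lemma E_term_le_large_d_shape:
  fixes B al be A :: real and d m :: nat
  defines "t \<equiv> real (totient d) / 4"
  assumes "B > 0" "d \<ge> 1" "m \<ge> 2" "al * real (totient d) \<le> A" "\<bar>be\<bar> \<le> 1 / 4" "ln (real m) \<ge> 1"
  shows "E_term B al be d m \<le> real m powr (2 * log 2 (real d + 1) + A / 2)
           * (B^2 * real d / real (totient m)) powr t / ln (real m) powr (t / 2)"
proof -
  define P where "P = (B^2 * real d / real (totient m)) powr t"
  have "t \<ge> 0" "P \<ge> 0" by (simp_all add: t_def P_def)
  have "real m powr (2 * al * t) \<le> real m powr (A / 2)"
    using assms(4,5) by (intro powr_mono) (auto simp: t_def)
  moreover have "t / 2 \<le> (1 - 2 * be) * t"
    using assms(6) \<open>t \<ge> 0\<close> mult_right_mono[of "1 / 2" "1 - 2 * be" t] by simp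
  then have "ln (real m) powr (t / 2) \<le> ln (real m) powr ((1 - 2 * be) * t)"
    using assms(7) by (intro powr_mono)
  moreover have "real (F d m) \<le> real m powr (2 * log 2 (real d + 1))"
    using F_le_powr assms(3,4) by simp
  ultimately have "real (F d m) * P * real m powr (2 * al * t) / ln (real m) powr ((1 - 2 * be) * t)
      \<le> real m powr (2 * log 2 (real d + 1)) * P * real m powr (A / 2) / ln (real m) powr (t / 2)"
    using \<open>P \<ge> 0\<close> assms(7) by (intro frac_le mult_mono) auto
  then show ?thesis
    using E_term_eq[OF assms(2-4), of al be] by (simp add: P_def t_def powr_add mult_ac)
qed

lemma powr_div_powr_half_le_inverse_two_powr:
  fixes a M L t :: real
  assumes "0 \<le> a" "a \<le> M" "M \<ge> 1" "4 * M^2 \<le> L" "t \<ge> 0"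
  shows "a powr t / L powr (t / 2) \<le> 1 / 2 powr t"
proof -
  have "(2 * M) powr t = (4 * M^2) powr (t / 2)"
  proof -
    have "4 * M^2 = (2 * M) powr 2" using assms(3) by (simp add: power2_eq_square)
    then show ?thesis by (simp add: powr_powr)
  qed
  also have "\<dots> \<le> L powr (t / 2)"
    using assms(3-5) by (intro powr_mono2) auto
  finally have "M powr t * 2 powr t \<le> L powr (t / 2)"
    using assms(3) by (simp add: powr_mult mult.commute)
  moreover have "a powr t \<le> M powr t" using assms(1,2,5) by (intro powr_mono2)
  ultimately have "a powr t / L powr (t / 2) \<le> M powr t / (M powr t * 2 powr t)"
    using assms(3) by (intro frac_le) auto
  also have "\<dots> = 1 / 2 powr t" using assms(3) by simp
  finally show ?thesis .
qed

lemma powr_div_le_powr_neg_eighth: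
  fixes a M Cp x y p t :: real
  assumes "0 \<le> a" "a \<le> M" "M \<ge> 1" "Cp > 0" "t \<ge> 0" "x > 0" "y > 0" "x \<le> y powr (1 / 4)"
    and "sqrt y \<le> Cp * p" "M * Cp \<le> sqrt x"
  shows "(a * x / p) powr t \<le> y powr (- t / 8)"
proof -
  have "sqrt y / Cp \<le> p" using assms(4,9) by (simp add: field_simps)
  moreover have "0 < sqrt y / Cp" using assms(4,7) by simp
  ultimately have "p > 0" by linarith
  have "a * x / p \<le> M * y powr (1 / 4) / (sqrt y / Cp)"
    using assms(1-4,6-8) \<open>sqrt y / Cp \<le> p\<close> by (intro frac_le mult_mono) auto
  also have "\<dots> = M * Cp * (y powr (1 / 4) / y powr (1 / 2))"
    using assms(4,7) by (simp add: powr_half_sqrt field_simps)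
  also have "y powr (1 / 4) / y powr (1 / 2) = y powr (- 1 / 4)"
    by (simp add: powr_diff[symmetric])
  finally have "(a * x / p) powr t \<le> (M * Cp * y powr (- 1 / 4)) powr t"
    using assms(1,5-7) \<open>p > 0\<close> by (intro powr_mono2) auto
  also have "\<dots> = (M * Cp) powr t * y powr (- t / 4)"
    using assms(3,4) by (simp add: powr_mult powr_powr)
  also have "(M * Cp) powr t \<le> y powr (t / 8)"
  proof -
    have "(M * Cp) powr t \<le> sqrt x powr t"
      using assms(3-5,10) by (intro powr_mono2) auto
    also have "\<dots> = x powr (t / 2)"
      using assms(6) by (simp add: powr_half_sqrt[symmetric] powr_powr)
    also have "\<dots> \<le> (y powr (1 / 4)) powr (t / 2)"
      using assms(5,6,8) by (intro powr_mono2) auto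
    finally show ?thesis by (simp add: powr_powr)
  qed
  finally show ?thesis by (simp add: mult_right_mono powr_add[symmetric])
qed

lemma E_term_le_small_m:
  fixes B al be A :: real and d m :: nat
  defines "t \<equiv> real (totient d) / 4" and "M \<equiv> max (B^2) 1"
  assumes "B > 0" "d \<ge> 3" "m \<ge> 2" "d \<le> totient m" "real m \<le> real d ^ 4"
    and "al * real (totient d) \<le> A" "\<bar>be\<bar> \<le> 1 / 4" "A \<ge> 0" "4 * M^2 \<le> ln (real d)"
  shows "E_term B al be d m \<le> real d powr (8 * log 2 (real d + 1) + 2 * A) / 2 powr t"
proof -
  define x y L where "x = real d" and "y = real m" and "L = ln (real m)"
  define e where "e = 2 * log 2 (x + 1) + A / 2"
  have "x \<ge> 3" using assms(4) by (simp add: x_def)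
  have "totient m < m" using assms(5) by (intro totient_less) simp
  then have "x \<le> real (totient m)" "real (totient m) < y"
    using assms(6) by (auto simp: x_def y_def)
  then have "ln x \<le> L" using \<open>x \<ge> 3\<close> by (simp add: L_def y_def)
  then have "4 * M^2 \<le> L" using assms(11) by (simp add: x_def)
  moreover have "1 \<le> M^2" by (simp add: M_def)
  ultimately have "L \<ge> 1" by linarith
  have "x / real (totient m) \<le> 1"
    using \<open>x \<le> real (totient m)\<close> \<open>x \<ge> 3\<close> by (auto simp: divide_le_eq_1)
  then have "B^2 * (x / real (totient m)) \<le> B^2 * 1" by (intro mult_left_mono) auto
  then have factor: "(B^2 * x / real (totient m)) powr t / L powr (t / 2) \<le> 1 / 2 powr t"
    using \<open>4 * M^2 \<le> L\<close> \<open>x \<ge> 3\<close>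
    by (intro powr_div_powr_half_le_inverse_two_powr) (auto simp: M_def t_def)
  have "y powr e \<le> (x ^ 4) powr e"
    using assms(7,10) \<open>x \<ge> 3\<close> by (intro powr_mono2) (auto simp: e_def x_def y_def)
  also have "\<dots> = x powr (4 * e)"
  proof -
    have "x ^ 4 = x powr 4" using \<open>x \<ge> 3\<close> by simp
    then show ?thesis by (simp only: powr_powr)
  qed
  also have "4 * e = 8 * log 2 (x + 1) + 2 * A" by (simp add: e_def)
  finally have y_powr: "y powr e \<le> x powr (8 * log 2 (x + 1) + 2 * A)" .
  have "E_term B al be d m \<le> y powr e * ((B^2 * x / real (totient m)) powr t / L powr (t / 2))"
    using E_term_le_large_d_shape[OF assms(3) _ assms(5,8,9) \<open>L \<ge> 1\<close>[unfolded L_def]] assms(4)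
    by (simp add: x_def y_def L_def e_def t_def)
  also have "\<dots> \<le> x powr (8 * log 2 (x + 1) + 2 * A) * (1 / 2 powr t)"
    using y_powr factor by (intro mult_mono) auto
  finally show ?thesis by (simp add: x_def)
qed

lemma E_term_le_large_m:
  fixes B al be A Cp :: real and d m :: nat
  defines "t \<equiv> real (totient d) / 4" and "M \<equiv> max (B^2) 1"
  assumes "B > 0" "d \<ge> 3" "real d ^ 4 < real m"
    and "al * real (totient d) \<le> A" "\<bar>be\<bar> \<le> 1 / 4"
    and "sqrt (real m) \<le> Cp * real (totient m)" "Cp > 0" "M * Cp \<le> sqrt (real d)"
  shows "E_term B al be d m \<le> real m powr (2 * log 2 (real d + 1) + A / 2 - t / 8)"
proof -
  define x y L where "x = real d" and "y = real m" and "L = ln (real m)"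
  define e where "e = 2 * log 2 (x + 1) + A / 2"
  have "x \<ge> 3" using assms(4) by (simp add: x_def)
  have "(3::real) ^ 4 \<le> x ^ 4" using \<open>x \<ge> 3\<close> by (intro power_mono) auto
  then have "81 \<le> x ^ 4" by simp
  then have "y > 81" using assms(5) unfolding x_def y_def by linarith
  then have "m \<ge> 2" by (simp add: y_def)
  have "ln 3 \<le> L" using \<open>y > 81\<close> by (simp add: L_def y_def)
  then have "L \<ge> 1" using ln3_gt_1 by linarith
  have x_le: "x \<le> y powr (1 / 4)"
  proof -
    have "x ^ 4 = x powr 4" using \<open>x \<ge> 3\<close> by simp
    then have "(x ^ 4) powr (1 / 4) = x powr (4 * (1 / 4))" by (simp only: powr_powr)
    then have "x = (x ^ 4) powr (1 / 4)" using \<open>x \<ge> 3\<close> by simp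
    also have "\<dots> \<le> y powr (1 / 4)" using assms(5) by (intro powr_mono2) (auto simp: x_def y_def)
    finally show ?thesis .
  qed
  have "t \<ge> 0" by (simp add: t_def)
  have "(B^2 * x / real (totient m)) powr t / L powr (t / 2) \<le> (B^2 * x / real (totient m)) powr t"
    using \<open>L \<ge> 1\<close> \<open>t \<ge> 0\<close> by (simp add: divide_le_eq ge_one_powr_ge_zero mult_le_cancel_left1)
  also have "\<dots> \<le> y powr (- t / 8)"
    using \<open>x \<ge> 3\<close> \<open>y > 81\<close> x_le assms(8-10) \<open>t \<ge> 0\<close>
    by (intro powr_div_le_powr_neg_eighth[where M = M]) (auto simp: M_def x_def y_def)
  finally have "y powr e * ((B^2 * x / real (totient m)) powr t / L powr (t / 2)) \<le> y powr e * y powr (- t / 8)"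
    by (rule mult_left_mono) simp
  moreover have "E_term B al be d m \<le> y powr e * ((B^2 * x / real (totient m)) powr t / L powr (t / 2))"
    using E_term_le_large_d_shape[OF assms(3) _ \<open>m \<ge> 2\<close> assms(6,7) \<open>L \<ge> 1\<close>[unfolded L_def]] assms(4)
    by (simp add: x_def y_def L_def e_def t_def)
  ultimately show ?thesis by (simp add: x_def y_def e_def powr_add[symmetric])
qed

lemma two_powr_decay_le_inverse_squares:
  fixes x y e t t0 :: real
  assumes "x \<ge> 3" "0 < y" "y \<le> x ^ 4" "t0 \<le> t" "(e + 10) * ln x \<le> ln 2 * t0"
  shows "x powr e / 2 powr t \<le> inverse (y ^ 2) * inverse (x ^ 2)"
proof -
  have "x powr e / 2 powr t \<le> x powr e / 2 powr t0"
    using assms(4) by (intro divide_left_mono) auto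
  also have "\<dots> = exp (e * ln x - t0 * ln 2)"
    using assms(1) by (simp add: powr_def exp_diff)
  also have "\<dots> \<le> exp (- 10 * ln x)"
    using assms(5) by (simp add: algebra_simps)
  also have "\<dots> = inverse (exp (ln (x ^ 10)))"
    using assms(1) by (simp add: ln_realpow exp_minus)
  also have "\<dots> = inverse (x ^ 10)"
    using assms(1) by simp
  also have "\<dots> \<le> inverse (y ^ 2 * x ^ 2)"
  proof (rule le_imp_inverse_le)
    have "y ^ 2 \<le> (x ^ 4) ^ 2" using assms(2,3) by (intro power_mono) auto
    then have "y ^ 2 * x ^ 2 \<le> (x ^ 4) ^ 2 * x ^ 2" by (intro mult_right_mono) auto
    then show "y ^ 2 * x ^ 2 \<le> x ^ 10" by (simp flip: power_mult power_add)
  qed (use assms(1,2) in simp)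
  finally show ?thesis by (simp add: inverse_mult_distrib)
qed

lemma powr_decay_le_inverse_squares:
  fixes x y e :: real
  assumes "x \<ge> 1" "x ^ 4 < y" "e \<le> - 5 / 2"
  shows "y powr e \<le> inverse (y ^ 2) * inverse (x ^ 2)"
proof -
  have "1 \<le> x ^ 4" using assms(1) by simp
  then have "y > 1" using assms(2) by linarith
  have "x ^ 2 \<le> y powr (1 / 2)"
  proof -
    have "x ^ 4 = x powr 4" using assms(1) by simp
    then have "(x ^ 4) powr (1 / 2) = x powr (4 * (1 / 2))" by (simp only: powr_powr)
    then have "x ^ 2 = (x ^ 4) powr (1 / 2)" using assms(1) by simp
    also have "\<dots> \<le> y powr (1 / 2)" using assms(1,2) by (intro powr_mono2) auto
    finally show ?thesis .
  qed
  have "y powr e \<le> y powr (- (5 / 2))" using assms(3) \<open>y > 1\<close> by (intro powr_mono) auto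
  also have "\<dots> = inverse (y powr (2 + 1 / 2))" by (simp add: powr_minus)
  also have "\<dots> = inverse (y ^ 2 * y powr (1 / 2))"
    using \<open>y > 1\<close> by (simp only: powr_add) simp
  also have "\<dots> \<le> inverse (y ^ 2 * x ^ 2)"
    using \<open>x ^ 2 \<le> _\<close> assms(1) \<open>y > 1\<close> by (intro le_imp_inverse_le mult_left_mono) auto
  finally show ?thesis by (simp add: inverse_mult_distrib)
qed

text \<open>The numerical hypotheses on \<open>d\<close> hold for all large \<open>d\<close>, as they compare
  powers of \<open>log d\<close> with \<open>sqrt d\<close>; together with \<open>sqrt d \<le> Cp * totient d\<close> they make
  \<open>2 powr (- totient d / 4)\<close> and \<open>m powr (- totient d / 32)\<close> beat \<open>F d m\<close>.\<close>

lemma E_term_le_inverse_squares: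
  fixes B A Cp al be :: real and d m :: nat
  defines "M \<equiv> max (B^2) 1"
  assumes "B > 0" "A \<ge> 0" "Cp > 0" "\<And>m. m > 0 \<Longrightarrow> sqrt (real m) \<le> Cp * real (totient m)"
    and d: "3 \<le> real d" "4 * M^2 \<le> ln (real d)"
      "(8 * log 2 (real d + 1) + 2 * A + 10) * ln (real d) \<le> ln 2 * (sqrt (real d) / (4 * Cp))"
      "2 * log 2 (real d + 1) + A / 2 + 5 / 2 \<le> sqrt (real d) / (32 * Cp)" "M * Cp \<le> sqrt (real d)"
    and "al * real (totient d) \<le> A" "\<bar>be\<bar> \<le> 1 / 4" "m \<ge> 2"
  shows "E_term B al be d m \<le> inverse (real m ^ 2) * inverse (real d ^ 2)"
proof (cases "F d m = 0")
  case True
  then show ?thesis by (simp add: E_term_def)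
next
  case False
  define t where "t = real (totient d) / 4"
  have "d \<ge> 3" using d(1) by simp
  have t: "sqrt (real d) / (4 * Cp) \<le> t"
    using assms(4,5) \<open>d \<ge> 3\<close> by (simp add: t_def field_simps)
  have "d \<le> totient m" using False by (intro F_pos_imp_le_totient) simp
  show ?thesis
  proof (cases "real m \<le> real d ^ 4")
    case True
    have "E_term B al be d m \<le> real d powr (8 * log 2 (real d + 1) + 2 * A) / 2 powr t"
      using E_term_le_small_m[OF assms(2) \<open>d \<ge> 3\<close> assms(13) \<open>d \<le> totient m\<close> True assms(11,12,3)] d(2)
      unfolding M_def t_def by blast
    also have "\<dots> \<le> inverse (real m ^ 2) * inverse (real d ^ 2)"
      using d(1) _ True t d(3) by (rule two_powr_decay_le_inverse_squares) (use assms(13) in simp)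
    finally show ?thesis .
  next
    case False
    have "E_term B al be d m \<le> real m powr (2 * log 2 (real d + 1) + A / 2 - t / 8)"
      using E_term_le_large_m[OF assms(2) \<open>d \<ge> 3\<close> _ assms(11,12) assms(5,4)] False d(5)
      unfolding M_def t_def by simp
    also have "\<dots> \<le> inverse (real m ^ 2) * inverse (real d ^ 2)"
    proof (rule powr_decay_le_inverse_squares)
      have "sqrt (real d) / (32 * Cp) = sqrt (real d) / (4 * Cp) / 8" by simp
      then show "2 * log 2 (real d + 1) + A / 2 - t / 8 \<le> - 5 / 2" using d(4) t by linarith
    qed (use d(1) False in auto)
    finally show ?thesis .
  qed
qed

lemma eventually_E_term_le_inverse_squares:
  fixes B A :: real
  assumes "B > 0"
  shows "\<forall>\<^sub>F d in sequentially. \<forall>al be m. al * real (totient d) \<le> A \<longrightarrow> \<bar>be\<bar> \<le> 1 / 4 \<longrightarrow> m \<ge> 2 \<longrightarrow>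
           E_term B al be d m \<le> inverse (real m ^ 2) * inverse (real d ^ 2)"
proof -
  obtain Cp where Cp: "Cp > 0" "\<And>m. m > 0 \<Longrightarrow> sqrt (real m) \<le> Cp * real (totient m)"
    using sqrt_le_totient by blast
  define M where "M = max (B^2) 1"
  define A' where "A' = max A 0"
  have "\<forall>\<^sub>F x in at_top. 3 \<le> x \<and> 4 * M^2 \<le> ln x \<and>
      (8 * log 2 (x + 1) + 2 * A' + 10) * ln x \<le> ln 2 * (sqrt x / (4 * Cp)) \<and>
      2 * log 2 (x + 1) + A' / 2 + 5 / 2 \<le> sqrt x / (32 * Cp) \<and> M * Cp \<le> sqrt (x :: real)"
    using Cp(1) by (intro eventually_conj) real_asymp+
  then have "\<forall>\<^sub>F d in sequentially. 3 \<le> real d \<and> 4 * M^2 \<le> ln (real d) \<and>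
      (8 * log 2 (real d + 1) + 2 * A' + 10) * ln (real d) \<le> ln 2 * (sqrt (real d) / (4 * Cp)) \<and>
      2 * log 2 (real d + 1) + A' / 2 + 5 / 2 \<le> sqrt (real d) / (32 * Cp) \<and> M * Cp \<le> sqrt (real d)"
    using filterlim_real_sequentially by (rule eventually_compose_filterlim)
  then show ?thesis
  proof (rule eventually_mono, intro allI impI)
    fix d m :: nat and al be :: real
    assume "3 \<le> real d \<and> 4 * M^2 \<le> ln (real d) \<and>
      (8 * log 2 (real d + 1) + 2 * A' + 10) * ln (real d) \<le> ln 2 * (sqrt (real d) / (4 * Cp)) \<and>
      2 * log 2 (real d + 1) + A' / 2 + 5 / 2 \<le> sqrt (real d) / (32 * Cp) \<and> M * Cp \<le> sqrt (real d)"
      and "al * real (totient d) \<le> A" "\<bar>be\<bar> \<le> 1 / 4" "m \<ge> 2"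
    then show "E_term B al be d m \<le> inverse (real m ^ 2) * inverse (real d ^ 2)"
      using assms Cp unfolding M_def A'_def
      by (auto intro!: E_term_le_inverse_squares[where A = "max A 0" and Cp = Cp])
  qed
qed

section \<open>Summation over \<open>d\<close>\<close>

lemma suminf_ennreal_less_top:
  fixes f :: "nat \<Rightarrow> ennreal" and g :: "nat \<Rightarrow> real"
  assumes "\<And>n. f n < \<infinity>" "summable g" "\<And>n. g n \<ge> 0"
    and "\<forall>\<^sub>F n in sequentially. f n \<le> ennreal (g n)"
  shows "suminf f < \<infinity>"
proof -
  obtain N where N: "\<And>n. n \<ge> N \<Longrightarrow> f n \<le> ennreal (g n)"
    using assms(4) by (auto simp: eventually_sequentially)
  define f0 where "f0 n = (if n < N then f n else 0)" for n
  have "f n \<le> f0 n + ennreal (g n)" for n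
    using N[of n] by (cases "n < N") (auto simp: f0_def add_increasing2)
  then have "suminf f \<le> suminf f0 + (\<Sum>n. ennreal (g n))"
    by (subst suminf_add) (auto intro: suminf_le)
  also have "suminf f0 = (\<Sum>n<N. f0 n)" by (rule suminf_finite) (auto simp: f0_def)
  also have "(\<Sum>n. ennreal (g n)) = ennreal (suminf g)"
    using assms(3,2) by (rule suminf_ennreal2)
  also have "(\<Sum>n<N. f0 n) + ennreal (suminf g) < \<infinity>"
    using assms(1) by (simp add: f0_def sum_Pinfty)
  finally show ?thesis .
qed

lemma E_inf_eq_ennreal_suminf:
  assumes "summable (\<lambda>m. if m \<ge> 2 then E_term B al be d m else 0)"
  shows "E_inf B al be d = ennreal (\<Sum>m. if m \<ge> 2 then E_term B al be d m else 0)"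
  unfolding E_inf_def
  by (subst suminf_ennreal2[OF _ assms, symmetric]) (auto simp: E_term_def intro: suminf_cong)

lemma E_inf_le_inverse_square:
  assumes "\<And>m. m \<ge> 2 \<Longrightarrow> E_term B al be d m \<le> inverse (real m ^ 2) * c" "c \<ge> 0"
  shows "E_inf B al be d \<le> ennreal ((\<Sum>m. inverse (real m ^ 2)) * c)"
proof -
  have summable: "summable (\<lambda>m. inverse (real m ^ 2) :: real)"
    using inverse_power_summable[of 2, where 'a = real] by simp
  have "E_inf B al be d \<le> (\<Sum>m. ennreal (inverse (real m ^ 2) * c))"
    unfolding E_inf_def using assms by (intro suminf_le) (auto intro: ennreal_leI)
  also have "\<dots> = ennreal (\<Sum>m. inverse (real m ^ 2) * c)"
    using summable_mult2[OF summable] assms(2) by (intro suminf_ennreal2) auto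
  also have "(\<Sum>m. inverse (real m ^ 2) * c) = (\<Sum>m. inverse (real m ^ 2)) * c"
    by (rule suminf_mult2[OF summable, symmetric])
  finally show ?thesis .
qed

theorem proposition9p8:
  fixes B :: real and \<alpha> \<beta> :: "nat \<Rightarrow> real"
  assumes "B > 0"
    and "bounded ((\<lambda>d. \<alpha> d * real (totient d)) ` {3..})"
    and "\<beta> \<longlonglongrightarrow> 0"
  shows "(\<Sum>d. if d \<ge> 3 \<and> real (totient d) * (1 - 2 * \<alpha> d) > 4
               then E_inf B (\<alpha> d) (\<beta> d) d else 0) < \<infinity>"
proof -
  obtain A where A: "\<And>d. d \<ge> 3 \<Longrightarrow> \<alpha> d * real (totient d) \<le> A"
    using bounded_imp_bdd_above[OF assms(2)] by (auto simp: bdd_above_def)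
  have "\<forall>\<^sub>F d in sequentially. \<bar>\<beta> d\<bar> < 1 / 4"
    using tendsto_rabs[OF assms(3)] by (rule order_tendstoD(2)) simp
  define S where "S = (\<Sum>m. inverse (real m ^ 2) :: real)"
  have summable: "summable (\<lambda>m. inverse (real m ^ 2) :: real)"
    using inverse_power_summable[of 2, where 'a = real] by simp
  show ?thesis
  proof (rule suminf_ennreal_less_top[where g = "\<lambda>d. S * inverse (real d ^ 2)"])
    show "(if d \<ge> 3 \<and> real (totient d) * (1 - 2 * \<alpha> d) > 4 then E_inf B (\<alpha> d) (\<beta> d) d else 0) < \<infinity>" for d
      using summable_E_term[OF assms(1), of d "\<alpha> d" "\<beta> d"] by (auto simp: E_inf_eq_ennreal_suminf)
    show "summable (\<lambda>d. S * inverse (real d ^ 2))" using summable by (rule summable_mult)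
    show "S * inverse (real d ^ 2) \<ge> 0" for d using summable by (simp add: S_def suminf_nonneg)
    show "\<forall>\<^sub>F d in sequentially. (if d \<ge> 3 \<and> real (totient d) * (1 - 2 * \<alpha> d) > 4
        then E_inf B (\<alpha> d) (\<beta> d) d else 0) \<le> ennreal (S * inverse (real d ^ 2))"
      using eventually_E_term_le_inverse_squares[OF assms(1), of A] \<open>\<forall>\<^sub>F d in sequentially. \<bar>\<beta> d\<bar> < 1 / 4\<close>
      by eventually_elim (auto simp: S_def A intro!: E_inf_le_inverse_square)
  qed
qed

end
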